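(* Let $\mathcal{P}$ and $\mathcal{N}$ be disjoint finite index sets (positives and negatives) with $|\mathcal{P}|\ge 1$. Let $(s_i)_{i\in\mathcal{P}\cup\mathcal{N}}$ be real logits, pairwise distinct, and for each $i\in\mathcal{P}$ let $\mathrm{IoU}_i\in[0,1]$. Take the smoothing parameter $\delta=0$, i.e. $H(x)=1$ for $x>0$ and $H(x)=0$ for $x<0$. Then, for every index $i\in\mathcal{P}\cup\mathcal{N}$, the Bucketed AP Loss gradient equals the AP Loss gradient, $\frac{\partial\mathcal{L}_{BAP}}{\partial s_i}=\frac{\partial\mathcal{L}_{AP}}{\partial s_i}$, and the Bucketed RS Loss gradient equals the RS Loss gradient, $\frac{\partial\mathcal{L}_{BRS}}{\partial s_i}=\frac{\partial\mathcal{L}_{RS}}{\partial s_i}$, where all four quantities are defined as in the context.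
   Context: Notation. $x_{ij}=s_j-s_i$. For $i\in\mathcal{P}$: $N_{FP}(i)=\sum_{j\in\mathcal{N}}H(x_{ij})$, $\mathrm{rank}(i)=1+\sum_{j\in\mathcal{P}\cup\mathcal{N},\,j\ne i}H(x_{ij})$, $\mathrm{rank}^+(i)=1+\sum_{j\in\mathcal{P},\,j\neq i}H(x_{ij})$ (the self-term counts as $1$). Convention: a ratio with zero denominator is $0$. Ranking error $\ell_R(i)=N_{FP}(i)/\mathrm{rank}(i)$, ranking pmf $p_R(j|i)=H(x_{ij})/N_{FP}(i)$ for $j\in\mathcal{N}$. Sorting error $\ell_S(i)=\frac{1}{\mathrm{rank}^+(i)}\sum_{j\in\mathcal{P}}H(x_{ij})(1-\mathrm{IoU}_j)$; target sorting error $\ell^*_S(i)=\frac{\sum_{j\in\mathcal{P}}H(x_{ij})[\mathrm{IoU}_j\ge \mathrm{IoU}_i](1-\mathrm{IoU}_j)}{\sum_{j\in\mathcal{P}}H(x_{ij})[\mathrm{IoU}_j\ge\mathrm{IoU}_i]}$; sorting pmf $p_S(j|i)=\frac{H(x_{ij})[\mathrm{IoU}_j<\mathrm{IoU}_i]}{\sum_{k\in\mathcal{P}}H(x_{ik})[\mathrm{IoU}_k<\mathrm{IoU}_i]}$ for $j\in\mathcal{P}$ ($[\cdot]$ is the Iverson bracket; in these $\mathcal{P}$-sums the term $j=i$ uses $H(x_{ii}):=1$). AP Loss gradients (identity update): for $i\in\mathcal{P}$, $\frac{\partial\mathcal{L}_{AP}}{\partial s_i}=-\frac{1}{|\mathcal{P}|}\ell_R(i)$;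 for $i\in\mathcal{N}$, $\frac{\partial\mathcal{L}_{AP}}{\partial s_i}=\frac{1}{|\mathcal{P}|}\sum_{j\in\mathcal{P}}\ell_R(j)p_R(i|j)$. RS Loss gradients: for $i\in\mathcal{N}$ they equal the AP Loss gradients; for $i\in\mathcal{P}$, $\frac{\partial\mathcal{L}_{RS}}{\partial s_i}=\frac{1}{|\mathcal{P}|}\big(-\ell_R(i)+\ell^*_S(i)-\ell_S(i)+\sum_{j\in\mathcal{P}}(\ell_S(j)-\ell^*_S(j))p_S(i|j)\big)$. Buckets. Sort all logits decreasingly; the positives appear as $\hat s^+_1>\dots>\hat s^+_{|\mathcal{P}|}$. Bucket $B_1$ is the set of negatives with logit $>\hat s^+_1$, $B_k$ ($2\le k\le|\mathcal{P}|$) the negatives with logit in $(\hat s^+_k,\hat s^+_{k-1})$, $B_{|\mathcal{P}|+1}$ the negatives with logit $<\hat s^+_{|\mathcal{P}|}$; $b_k=|B_k|$. For nonempty $B_k$, the prototype logit $s^b_k$ is the mean of the logits in $B_k$, and $x^b_{ik}=s^b_k-s_i$. For $i\in\mathcal{P}$: $N^b_{FP}(i)=\sum_{k:b_k>0}H(x^b_{ik})b_k$, bucketed ranking error $\ell^b_R(i)=\frac{N^b_{FP}(i)}{\sum_{j\in\mathcal{P}}H(x_{ij})+N^b_{FP}(i)}$ (with $H(x_{ii}):=1$), and bucket pmf $p(k^b|i)=\frac{b_kH(x^b_{ik})}{N^b_{FP}(i)}$. Bucketed AP Loss gradients: for $i\in\mathcal{P}$, $\frac{\partial\mathcal{L}_{BAP}}{\partial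 s_i}=-\frac{1}{|\mathcal{P}|}\ell^b_R(i)$; for a negative $i\in B_k$, $\frac{\partial\mathcal{L}_{BAP}}{\partial s_i}=\frac{1}{|\mathcal{P}|}\sum_{j\in\mathcal{P}}\ell^b_R(j)\,p(k^b|j)\,\frac{1}{b_k}$. Bucketed RS Loss gradients: for negatives equal to the Bucketed AP gradients; for $i\in\mathcal{P}$, $\frac{\partial\mathcal{L}_{BRS}}{\partial s_i}=\frac{1}{|\mathcal{P}|}\big(-\ell^b_R(i)+\ell^*_S(i)-\ell_S(i)+\sum_{j\in\mathcal{P}}(\ell_S(j)-\ell^*_S(j))p_S(i|j)\big)$. *)

theory Defs
  imports Complex_Main
begin

text \<open>H x = 1 for x > 0 and 0 for x < 0; the value at 0 is irrelevant under the
  distinctness hypothesis (we set it to 0).\<close>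
definition H :: "real \<Rightarrow> real" where
  "H x = (if x > 0 then 1 else 0)"

text \<open>x_ij = s_j - s_i, with the convention H(x_ii) := 1 used in the P-sums.\<close>
definition Hs :: "('a \<Rightarrow> real) \<Rightarrow> 'a \<Rightarrow> 'a \<Rightarrow> real" where
  "Hs s i j = (if j = i then 1 else H (s j - s i))"

definition NFP :: "'a set \<Rightarrow> ('a \<Rightarrow> real) \<Rightarrow> 'a \<Rightarrow> real" where
  "NFP N s i = (\<Sum>j\<in>N. H (s j - s i))"

definition rnk :: "'a set \<Rightarrow> 'a set \<Rightarrow> ('a \<Rightarrow> real) \<Rightarrow> 'a \<Rightarrow> real" where
  "rnk P N s i = 1 + (\<Sum>j\<in>(P \<union> N) - {i}. H (s j - s i))"

definition rnkp :: "'a set \<Rightarrow> ('a \<Rightarrow> real) \<Rightarrow> 'a \<Rightarrow> real" where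
  "rnkp P s i = 1 + (\<Sum>j\<in>P - {i}. H (s j - s i))"

text \<open>Division by zero yields 0 in Isabelle, matching the paper's convention.\<close>
definition lR :: "'a set \<Rightarrow> 'a set \<Rightarrow> ('a \<Rightarrow> real) \<Rightarrow> 'a \<Rightarrow> real" where
  "lR P N s i = NFP N s i / rnk P N s i"

definition pR :: "'a set \<Rightarrow> ('a \<Rightarrow> real) \<Rightarrow> 'a \<Rightarrow> 'a \<Rightarrow> real" where
  "pR N s j i = H (s j - s i) / NFP N s i"

definition lS :: "'a set \<Rightarrow> ('a \<Rightarrow> real) \<Rightarrow> ('a \<Rightarrow> real) \<Rightarrow> 'a \<Rightarrow> real" where
  "lS P s iou i = (1 / rnkp P s i) * (\<Sum>j\<in>P. Hs s i j * (1 - iou j))"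

definition lSstar :: "'a set \<Rightarrow> ('a \<Rightarrow> real) \<Rightarrow> ('a \<Rightarrow> real) \<Rightarrow> 'a \<Rightarrow> real" where
  "lSstar P s iou i =
     (\<Sum>j\<in>P. Hs s i j * (if iou j \<ge> iou i then 1 else 0) * (1 - iou j)) /
     (\<Sum>j\<in>P. Hs s i j * (if iou j \<ge> iou i then 1 else 0))"

definition pS :: "'a set \<Rightarrow> ('a \<Rightarrow> real) \<Rightarrow> ('a \<Rightarrow> real) \<Rightarrow> 'a \<Rightarrow> 'a \<Rightarrow> real" where
  "pS P s iou j i =
     (Hs s i j * (if iou j < iou i then 1 else 0)) /
     (\<Sum>k\<in>P. Hs s i k * (if iou k < iou i then 1 else 0))"

definition gradAP :: "'a set \<Rightarrow> 'a set \<Rightarrow> ('a \<Rightarrow> real) \<Rightarrow> 'a \<Rightarrow> real" where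
  "gradAP P N s i =
     (if i \<in> P then - (1 / real (card P)) * lR P N s i
      else (1 / real (card P)) * (\<Sum>j\<in>P. lR P N s j * pR N s i j))"

definition sortgrad :: "'a set \<Rightarrow> ('a \<Rightarrow> real) \<Rightarrow> ('a \<Rightarrow> real) \<Rightarrow> 'a \<Rightarrow> real" where
  "sortgrad P s iou i = lSstar P s iou i - lS P s iou i +
     (\<Sum>j\<in>P. (lS P s iou j - lSstar P s iou j) * pS P s iou i j)"

definition gradRS :: "'a set \<Rightarrow> 'a set \<Rightarrow> ('a \<Rightarrow> real) \<Rightarrow> ('a \<Rightarrow> real) \<Rightarrow> 'a \<Rightarrow> real" where
  "gradRS P N s iou i =
     (if i \<in> P then (1 / real (card P)) * (- lR P N s i + sortgrad P s iou i)
      else gradAP P N s i)"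

text \<open>shat k = k-th largest positive logit (k = 1 .. |P|).\<close>
definition shat :: "'a set \<Rightarrow> ('a \<Rightarrow> real) \<Rightarrow> nat \<Rightarrow> real" where
  "shat P s k = rev (sorted_list_of_set (s ` P)) ! (k - 1)"

definition bucket :: "'a set \<Rightarrow> 'a set \<Rightarrow> ('a \<Rightarrow> real) \<Rightarrow> nat \<Rightarrow> 'a set" where
  "bucket P N s k =
     (if k = 1 then {n\<in>N. s n > shat P s 1}
      else if k = card P + 1 then {n\<in>N. s n < shat P s (card P)}
      else {n\<in>N. shat P s k < s n \<and> s n < shat P s (k - 1)})"

definition bsz :: "'a set \<Rightarrow> 'a set \<Rightarrow> ('a \<Rightarrow> real) \<Rightarrow> nat \<Rightarrow> real" where
  "bsz P N s k = real (card (bucket P N s k))"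

definition proto :: "'a set \<Rightarrow> 'a set \<Rightarrow> ('a \<Rightarrow> real) \<Rightarrow> nat \<Rightarrow> real" where
  "proto P N s k = (\<Sum>n\<in>bucket P N s k. s n) / bsz P N s k"

definition NbFP :: "'a set \<Rightarrow> 'a set \<Rightarrow> ('a \<Rightarrow> real) \<Rightarrow> 'a \<Rightarrow> real" where
  "NbFP P N s i = (\<Sum>k\<in>{k\<in>{1..card P + 1}. bsz P N s k > 0}.
                     H (proto P N s k - s i) * bsz P N s k)"

definition lbR :: "'a set \<Rightarrow> 'a set \<Rightarrow> ('a \<Rightarrow> real) \<Rightarrow> 'a \<Rightarrow> real" where
  "lbR P N s i = NbFP P N s i / ((\<Sum>j\<in>P. Hs s i j) + NbFP P N s i)"

definition pb :: "'a set \<Rightarrow> 'a set \<Rightarrow> ('a \<Rightarrow> real) \<Rightarrow> nat \<Rightarrow> 'a \<Rightarrow> real" where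
  "pb P N s k i = bsz P N s k * H (proto P N s k - s i) / NbFP P N s i"

definition bidx :: "'a set \<Rightarrow> 'a set \<Rightarrow> ('a \<Rightarrow> real) \<Rightarrow> 'a \<Rightarrow> nat" where
  "bidx P N s i = (THE k. k \<in> {1..card P + 1} \<and> i \<in> bucket P N s k)"

definition gradBAP :: "'a set \<Rightarrow> 'a set \<Rightarrow> ('a \<Rightarrow> real) \<Rightarrow> 'a \<Rightarrow> real" where
  "gradBAP P N s i =
     (if i \<in> P then - (1 / real (card P)) * lbR P N s i
      else (1 / real (card P)) *
        (\<Sum>j\<in>P. lbR P N s j * pb P N s (bidx P N s i) j * (1 / bsz P N s (bidx P N s i))))"

definition gradBRS :: "'a set \<Rightarrow> 'a set \<Rightarrow> ('a \<Rightarrow> real) \<Rightarrow> ('a \<Rightarrow> real) \<Rightarrow> 'a \<Rightarrow> real" where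
  "gradBRS P N s iou i =
     (if i \<in> P then (1 / real (card P)) * (- lbR P N s i + sortgrad P s iou i)
      else gradBAP P N s i)"

end

theory Submission
  imports Defs
begin

text \<open>The buckets are the open intervals cut out of the real line by the positive logits.
  For a positive j all negatives of one bucket B_k lie on the same side of s_j, hence so does
  their mean, the prototype logit. So b_k H(s^b_k - s_j) is the sum of H(s_n - s_j) over
  n in B_k, and as the buckets partition N this gives N^b_FP(j) = N_FP(j). Consequently the
  bucketed ranking error is the ranking error and p(k^b|j)/b_k = p_R(n|j) for n in B_k; the
  sorting terms of the two RS gradients are literally the same.\<close>

lemma H_mean_eq:
  fixes f :: "'a \<Rightarrow> real"
  assumes "finite B" "x \<in> B"
    and same_side: "\<And>y. y \<in> B \<Longrightarrow> c < f y \<longleftrightarrow> c < f x"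
    and ne: "\<And>y. y \<in> B \<Longrightarrow> f y \<noteq> c"
  shows "H (sum f B / card B - c) = H (f x - c)"
proof -
  have card_pos: "real (card B) > 0" using assms(1,2) card_gt_0_iff by fastforce
  have const: "(\<Sum>y\<in>B. c) = real (card B) * c" by simp
  have nonempty: "B \<noteq> {}" using assms(2) by blast
  show ?thesis
  proof (cases "c < f x")
    case True
    then have "(\<Sum>y\<in>B. c) < sum f B"
      using same_side by (intro sum_strict_mono[OF assms(1) nonempty]) blast
    then have "c < sum f B / card B" using card_pos const by (simp add: field_simps)
    with True show ?thesis by (simp add: H_def)
  next
    case False
    then have "f y < c" if "y \<in> B" for y
      using same_side[OF that] ne[OF that] by linarith
    then have "sum f B < (\<Sum>y\<in>B. c)"
      by (intro sum_strict_mono[OF assms(1) nonempty])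
    then have "sum f B / card B < c" using card_pos const by (simp add: field_simps)
    with False show ?thesis by (simp add: H_def)
  qed
qed

context
  fixes P :: "'a set" and s :: "'a \<Rightarrow> real"
  assumes finite_P: "finite P" and inj_s: "inj_on s P"
begin

lemma length_sorted_list_of_image: "length (sorted_list_of_set (s ` P)) = card P"
  using inj_s by (simp add: card_image)

lemma shat_strict_antimono:
  assumes "1 \<le> a" "a < b" "b \<le> card P"
  shows "shat P s b < shat P s a"
proof -
  let ?xs = "sorted_list_of_set (s ` P)"
  have len: "length ?xs = card P" by (rule length_sorted_list_of_image)
  have "?xs ! (card P - b) < ?xs ! (card P - a)"
    using assms len by (intro sorted_wrt_nth_less[where P = "(<)"]) auto
  with assms len show ?thesis by (simp add: shat_def rev_nth Suc_diff_Suc)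
qed

lemma shat_antimono:
  assumes "1 \<le> a" "a \<le> b" "b \<le> card P"
  shows "shat P s b \<le> shat P s a"
  using shat_strict_antimono[of a b] assms by (cases "a = b") auto

lemma shat_image: "shat P s ` {1..card P} = s ` P"
proof -
  let ?xs = "rev (sorted_list_of_set (s ` P))"
  have "shat P s ` {1..card P} = (\<lambda>i. ?xs ! i) ` {..<length ?xs}"
    unfolding length_rev length_sorted_list_of_image shat_def
    by (force simp: image_iff intro: bexI[of _ "Suc _"])
  also have "\<dots> = set ?xs" by (auto simp: set_conv_nth)
  also have "\<dots> = s ` P" using finite_P by simp
  finally show ?thesis .
qed

end

lemma bucket_subset: "bucket P N s k \<subseteq> N"
  by (auto simp: bucket_def)

lemma bucket_lower:
  assumes "n \<in> bucket P N s k" "1 \<le> k" "k \<le> card P"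
  shows "shat P s k < s n"
  using assms by (auto simp: bucket_def split: if_splits)

lemma bucket_upper:
  assumes "n \<in> bucket P N s k" "2 \<le> k" "k \<le> card P + 1"
  shows "s n < shat P s (k - 1)"
  using assms by (auto simp: bucket_def split: if_splits)

context
  fixes P N :: "'a set" and s :: "'a \<Rightarrow> real"
  assumes finite_P: "finite P" and finite_N: "finite N" and disjoint: "P \<inter> N = {}"
    and card_P: "card P \<ge> 1" and inj_s: "inj_on s (P \<union> N)"
begin

lemma inj_s_P: "inj_on s P"
  using inj_s by (rule inj_on_subset) simp

lemma finite_bucket: "finite (bucket P N s k)"
  using bucket_subset finite_N by (rule finite_subset)

lemma neg_ne_pos:
  assumes "n \<in> N" "j \<in> P"
  shows "s n \<noteq> s j"
  using assms disjoint inj_s by (auto dest: inj_onD)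

lemma neg_ne_shat:
  assumes "n \<in> N" "t \<in> {1..card P}"
  shows "s n \<noteq> shat P s t"
  using assms shat_image[OF finite_P inj_s_P] neg_ne_pos by blast

lemma bucket_above_shat_iff:
  assumes "n \<in> bucket P N s k" "k \<in> {1..card P + 1}" "t \<in> {1..card P}"
  shows "shat P s t < s n \<longleftrightarrow> k \<le> t"
proof
  assume "k \<le> t"
  then have "shat P s t \<le> shat P s k"
    using assms(2,3) by (intro shat_antimono[OF finite_P inj_s_P]) auto
  also have "\<dots> < s n" using assms(2,3) \<open>k \<le> t\<close> by (intro bucket_lower[OF assms(1)]) auto
  finally show "shat P s t < s n" .
next
  assume "shat P s t < s n"
  show "k \<le> t"
  proof (rule ccontr)
    assume "\<not> k \<le> t"
    then have "s n < shat P s (k - 1)" using assms(2,3) by (intro bucket_upper[OF assms(1)]) auto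
    also have "\<dots> \<le> shat P s t"
      using assms(2,3) \<open>\<not> k \<le> t\<close> by (intro shat_antimono[OF finite_P inj_s_P]) auto
    finally show False using \<open>shat P s t < s n\<close> by simp
  qed
qed

lemma bucket_same_side:
  assumes "n \<in> bucket P N s k" "n' \<in> bucket P N s k" "k \<in> {1..card P + 1}" "j \<in> P"
  shows "s j < s n' \<longleftrightarrow> s j < s n"
proof -
  obtain t where "t \<in> {1..card P}" "s j = shat P s t"
    using assms(4) shat_image[OF finite_P inj_s_P] by (metis imageE imageI)
  then show ?thesis using bucket_above_shat_iff assms(1-3) by simp
qed

lemma buckets_disjoint:
  assumes "k < k'" "1 \<le> k" "k' \<le> card P + 1"
  shows "bucket P N s k \<inter> bucket P N s k' = {}"
proof (intro equals0I)
  fix n assume n: "n \<in> bucket P N s k \<inter> bucket P N s k'"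
  have "shat P s k < s n" using n assms by (intro bucket_lower) auto
  moreover have "s n < shat P s (k' - 1)" using n assms by (intro bucket_upper) auto
  moreover have "shat P s (k' - 1) \<le> shat P s k"
    using assms by (intro shat_antimono[OF finite_P inj_s_P]) auto
  ultimately show False by simp
qed

lemma bucket_exists:
  assumes "n \<in> N"
  obtains k where "k \<in> {1..card P + 1}" "n \<in> bucket P N s k"
proof (cases "\<exists>t\<in>{1..card P}. shat P s t < s n")
  case False
  then have "\<not> shat P s (card P) < s n" using card_P by auto
  moreover have "s n \<noteq> shat P s (card P)" using neg_ne_shat[OF assms] card_P by auto
  ultimately have "s n < shat P s (card P)" by linarith
  then show ?thesis using that[of "card P + 1"] assms card_P by (simp add: bucket_def)
next
  case True
  define k where "k = (LEAST t. t \<in> {1..card P} \<and> shat P s t < s n)"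
  have "k \<in> {1..card P} \<and> shat P s k < s n"
    unfolding k_def by (rule LeastI_ex) (use True in blast)
  then have k: "k \<in> {1..card P}" "shat P s k < s n" by auto
  show ?thesis
  proof (cases "k = 1")
    case True
    then show ?thesis using that[of 1] k assms by (simp add: bucket_def)
  next
    case False
    then have "k - 1 < k" using k by simp
    then have "\<not> (k - 1 \<in> {1..card P} \<and> shat P s (k - 1) < s n)"
      unfolding k_def by (rule not_less_Least)
    then have "\<not> shat P s (k - 1) < s n" using k False by auto
    moreover have "s n \<noteq> shat P s (k - 1)" using k False by (intro neg_ne_shat[OF assms]) auto
    ultimately have "s n < shat P s (k - 1)" by linarith
    then show ?thesis using that[of k] k False assms by (simp add: bucket_def)
  qed
qed

lemma bucket_unique:
  assumes "k \<in> {1..card P + 1}" "k' \<in> {1..card P + 1}"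
    and "n \<in> bucket P N s k" "n \<in> bucket P N s k'"
  shows "k = k'"
  using assms buckets_disjoint[of k k'] buckets_disjoint[of k' k]
  by (cases k k' rule: linorder_cases) auto

lemma ex1_bucket:
  assumes "n \<in> N"
  shows "\<exists>!k. k \<in> {1..card P + 1} \<and> n \<in> bucket P N s k"
proof (rule ex_ex1I)
  obtain k where "k \<in> {1..card P + 1}" "n \<in> bucket P N s k" using bucket_exists[OF assms] .
  then show "\<exists>k. k \<in> {1..card P + 1} \<and> n \<in> bucket P N s k" by blast
qed (use bucket_unique in blast)

lemma bidx_bucket:
  assumes "n \<in> N"
  shows "bidx P N s n \<in> {1..card P + 1}" "n \<in> bucket P N s (bidx P N s n)"
proof -
  have "bidx P N s n \<in> {1..card P + 1} \<and> n \<in> bucket P N s (bidx P N s n)"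
    unfolding bidx_def by (rule theI'[OF ex1_bucket[OF assms]])
  then show "bidx P N s n \<in> {1..card P + 1}" "n \<in> bucket P N s (bidx P N s n)" by auto
qed

lemma Union_buckets: "(\<Union>k\<in>{1..card P + 1}. bucket P N s k) = N"
proof
  show "N \<subseteq> (\<Union>k\<in>{1..card P + 1}. bucket P N s k)"
  proof
    fix n assume "n \<in> N"
    then obtain k where "k \<in> {1..card P + 1}" "n \<in> bucket P N s k" by (rule bucket_exists)
    then show "n \<in> (\<Union>k\<in>{1..card P + 1}. bucket P N s k)" by blast
  qed
qed (intro UN_least bucket_subset)

lemma sum_over_buckets: "(\<Sum>k\<in>{1..card P + 1}. sum f (bucket P N s k)) = sum f N"
proof -
  have "sum f (\<Union>k\<in>{1..card P + 1}. bucket P N s k) = (\<Sum>k\<in>{1..card P + 1}. sum f (bucket P N s k))"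
  proof (rule sum.UNION_disjoint)
    show "\<forall>k\<in>{1..card P + 1}. \<forall>k'\<in>{1..card P + 1}. k \<noteq> k' \<longrightarrow>
            bucket P N s k \<inter> bucket P N s k' = {}"
      using bucket_unique by blast
  qed (simp_all add: finite_bucket)
  then show ?thesis by (simp only: Union_buckets)
qed

lemma H_proto_eq:
  assumes "n \<in> bucket P N s k" "k \<in> {1..card P + 1}" "j \<in> P"
  shows "H (proto P N s k - s j) = H (s n - s j)"
proof -
  have "finite (bucket P N s k)" by (rule finite_bucket)
  moreover have "s j < s n' \<longleftrightarrow> s j < s n" if "n' \<in> bucket P N s k" for n'
    using bucket_same_side[OF assms(1) that assms(2,3)] .
  moreover have "s n' \<noteq> s j" if "n' \<in> bucket P N s k" for n'
    using neg_ne_pos[OF subsetD[OF bucket_subset that] assms(3)] .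
  ultimately show ?thesis unfolding proto_def bsz_def by (rule H_mean_eq[OF _ assms(1)])
qed

lemma H_proto_mul_bsz:
  assumes "k \<in> {1..card P + 1}" "j \<in> P"
  shows "H (proto P N s k - s j) * bsz P N s k = (\<Sum>n\<in>bucket P N s k. H (s n - s j))"
proof (cases "bucket P N s k = {}")
  case True
  then show ?thesis by (simp add: bsz_def)
next
  case False
  then obtain n where n: "n \<in> bucket P N s k" by auto
  have "H (s n' - s j) = H (s n - s j)" if "n' \<in> bucket P N s k" for n'
    using H_proto_eq[OF that assms] H_proto_eq[OF n assms] by simp
  then have "(\<Sum>n'\<in>bucket P N s k. H (s n' - s j)) = (\<Sum>n'\<in>bucket P N s k. H (s n - s j))"
    by (rule sum.cong[OF refl])
  then show ?thesis using H_proto_eq[OF n assms] by (simp add: bsz_def)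
qed

lemma NbFP_eq_NFP:
  assumes "j \<in> P"
  shows "NbFP P N s j = NFP N s j"
proof -
  have "NbFP P N s j = (\<Sum>k\<in>{1..card P + 1}. H (proto P N s k - s j) * bsz P N s k)"
    unfolding NbFP_def by (rule sum.mono_neutral_left) (auto simp: bsz_def)
  also have "\<dots> = (\<Sum>k\<in>{1..card P + 1}. \<Sum>n\<in>bucket P N s k. H (s n - s j))"
    using H_proto_mul_bsz assms by simp
  also have "\<dots> = NFP N s j"
    unfolding NFP_def by (rule sum_over_buckets)
  finally show ?thesis .
qed

lemma lbR_eq_lR:
  assumes "j \<in> P"
  shows "lbR P N s j = lR P N s j"
proof -
  have positives: "(\<Sum>i\<in>P. Hs s j i) = 1 + (\<Sum>i\<in>P - {j}. H (s i - s j))"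
    using finite_P assms by (simp add: Hs_def sum.remove)
  have "(P \<union> N) - {j} = (P - {j}) \<union> N" using assms disjoint by auto
  then have "rnk P N s j = 1 + (\<Sum>i\<in>P - {j}. H (s i - s j)) + NFP N s j"
    using finite_P finite_N disjoint by (simp add: rnk_def NFP_def sum.union_disjoint Diff_Int_distrib2)
  then show ?thesis using positives NbFP_eq_NFP[OF assms] by (simp add: lbR_def lR_def add.assoc)
qed

lemma gradBAP_eq_gradAP_neg:
  assumes "n \<in> N"
  shows "gradBAP P N s n = gradAP P N s n"
proof -
  let ?k = "bidx P N s n"
  have "bsz P N s ?k > 0"
    using finite_bucket bidx_bucket(2)[OF assms] by (auto simp: bsz_def card_gt_0_iff)
  then have "lbR P N s j * pb P N s ?k j * (1 / bsz P N s ?k) = lR P N s j * pR N s n j"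
    if "j \<in> P" for j
    using lbR_eq_lR NbFP_eq_NFP H_proto_eq[OF bidx_bucket(2)[OF assms] bidx_bucket(1)[OF assms]] that
    by (simp add: pb_def pR_def)
  moreover have "n \<notin> P" using assms disjoint by auto
  ultimately show ?thesis by (simp add: gradBAP_def gradAP_def)
qed

end

theorem theorem1:
  fixes P N :: "'a set" and s iou :: "'a \<Rightarrow> real"
  assumes "finite P" and "finite N" and "P \<inter> N = {}" and "card P \<ge> 1"
    and "inj_on s (P \<union> N)"
    and "\<forall>i\<in>P. 0 \<le> iou i \<and> iou i \<le> 1"
  shows "\<forall>i\<in>P \<union> N. gradBAP P N s i = gradAP P N s i \<and>
                       gradBRS P N s iou i = gradRS P N s iou i"
proof
  fix i assume "i \<in> P \<union> N"
  then consider "i \<in> P" | "i \<in> N" "i \<notin> P" by blast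
  then show "gradBAP P N s i = gradAP P N s i \<and> gradBRS P N s iou i = gradRS P N s iou i"
  proof cases
    case 1
    then show ?thesis using lbR_eq_lR[OF assms(1-5)]
      by (simp add: gradBAP_def gradAP_def gradBRS_def gradRS_def)
  next
    case 2
    then show ?thesis using gradBAP_eq_gradAP_neg[OF assms(1-5)]
      by (simp add: gradBRS_def gradRS_def)
  qed
qed

end
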